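(* Let $(\tilde\Theta^n_I)$ be a congruent family of covariant $n$-tensor fields on $\mathcal M_+(I)$, $I$ ranging over finite sets, let $I$ be a finite set and $\lambda>0$. If $\vec i=(i_1,\dots,i_n),\vec j=(j_1,\dots,j_n)\in I^n$ are multiindices with $\mathbf P(\vec i)=\mathbf P(\vec j)$, then $$(\tilde\Theta^n_I)_{\lambda c_I}(\delta_{i_1},\dots,\delta_{i_n})=(\tilde\Theta^n_I)_{\lambda c_I}(\delta_{j_1},\dots,\delta_{j_n}).$$
   Context: For a finite set $I$: $\mathcal S(I)=\{\sum_{i\in I}x_i\delta_i:x_i\in\mathbb R\}$, $\mathcal M_+(I)=\{\sum\mu_i\delta_i:\mu_i>0\}$ (an open subset with tangent space $\mathcal S(I)$), and $c_I:=\frac1{|I|}\sum_{i\in I}\delta_i$. A covariant $n$-tensor field on $\mathcal M_+(I)$ is a continuously varying family of $n$-multilinear forms on $\mathcal S(I)$. A Markov kernel $K:I\to\mathcal P(I')$ between finite sets is a stochastic matrix $K(i)=\sum_{i'}K^i_{i'}\delta_{i'}$, with $K_*(\sum x_i\delta_i)=\sum_{i,i'}K^i_{i'}x_i\delta_{i'}$; it is congruent if there is a map $\kappa:I'\to I$ with $K^i_{i'}=0$ whenever $\kappa(i')\ne i$. The family is congruent if $(\tilde\Theta^n_{I'})_{K_*\mu}(K_*V_1,\dots,K_*V_n)=(\tilde\Theta^n_I)_\mu(V_1,\dots,V_n)$ for every congruent Markov kernel $K:I\to\mathcal P(I')$ between finite sets with $K_*(\mathcal M_+(I))\subset\mathcal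 M_+(I')$. For a multiindex $\vec i\in I^n$, $\mathbf P(\vec i)$ is the partition of $\{1,\dots,n\}$ into the equivalence classes of $k\sim l\iff i_k=i_l$. *)

theory Defs
  imports "HOL-Analysis.Analysis"
begin

text \<open>Finite sets I are modelled as finite subsets of nat. Elements of S(I) are functions
  nat => real vanishing outside I; x = sum x_i delta_i corresponds to the function i |-> x_i.\<close>

definition S_space :: "nat set \<Rightarrow> (nat \<Rightarrow> real) set" where
  "S_space I = {x. \<forall>i. i \<notin> I \<longrightarrow> x i = 0}"

definition M_plus :: "nat set \<Rightarrow> (nat \<Rightarrow> real) set" where
  "M_plus I = {mu \<in> S_space I. \<forall>i\<in>I. mu i > 0}"

definition delta :: "nat \<Rightarrow> nat \<Rightarrow> real" where
  "delta i = (\<lambda>j. if j = i then 1 else 0)"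

definition c_I :: "nat set \<Rightarrow> nat \<Rightarrow> real" where
  "c_I I = (\<lambda>i. if i \<in> I then 1 / real (card I) else 0)"

text \<open>A covariant n-tensor field on M_+(I): for each mu in M_+(I), Theta I mu is an
  n-multilinear form on S(I) (arguments given as a list of length n), varying continuously in mu.\<close>

definition multilinear_on :: "nat set \<Rightarrow> nat \<Rightarrow> ((nat \<Rightarrow> real) list \<Rightarrow> real) \<Rightarrow> bool" where
  "multilinear_on I n T \<longleftrightarrow>
     (\<forall>Vs k x y (a::real) b. length Vs = n \<and> set Vs \<subseteq> S_space I \<and> k < n
        \<and> x \<in> S_space I \<and> y \<in> S_space I \<longrightarrow>
        T (Vs[k := (\<lambda>i. a * x i + b * y i)]) = a * T (Vs[k := x]) + b * T (Vs[k := y]))"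

definition cov_tensor_field :: "nat \<Rightarrow> nat set \<Rightarrow> ((nat \<Rightarrow> real) \<Rightarrow> (nat \<Rightarrow> real) list \<Rightarrow> real) \<Rightarrow> bool" where
  "cov_tensor_field n I Th \<longleftrightarrow>
     (\<forall>mu\<in>M_plus I. multilinear_on I n (Th mu)) \<and>
     (\<forall>Vs. length Vs = n \<and> set Vs \<subseteq> S_space I \<longrightarrow> continuous_on (M_plus I) (\<lambda>mu. Th mu Vs))"

definition markov_kernel :: "nat set \<Rightarrow> nat set \<Rightarrow> (nat \<Rightarrow> nat \<Rightarrow> real) \<Rightarrow> bool" where
  "markov_kernel I I' K \<longleftrightarrow> (\<forall>i\<in>I. (\<forall>i'\<in>I'. K i i' \<ge> 0) \<and> (\<Sum>i'\<in>I'. K i i') = 1)"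

definition congruent_kernel :: "nat set \<Rightarrow> nat set \<Rightarrow> (nat \<Rightarrow> nat \<Rightarrow> real) \<Rightarrow> bool" where
  "congruent_kernel I I' K \<longleftrightarrow>
     markov_kernel I I' K \<and>
     (\<exists>\<kappa>. (\<forall>i'\<in>I'. \<kappa> i' \<in> I) \<and> (\<forall>i\<in>I. \<forall>i'\<in>I'. \<kappa> i' \<noteq> i \<longrightarrow> K i i' = 0))"

definition push :: "nat set \<Rightarrow> nat set \<Rightarrow> (nat \<Rightarrow> nat \<Rightarrow> real) \<Rightarrow> (nat \<Rightarrow> real) \<Rightarrow> nat \<Rightarrow> real" where
  "push I I' K x = (\<lambda>i'. if i' \<in> I' then (\<Sum>i\<in>I. K i i' * x i) else 0)"

definition congruent_family ::
  "nat \<Rightarrow> (nat set \<Rightarrow> (nat \<Rightarrow> real) \<Rightarrow> (nat \<Rightarrow> real) list \<Rightarrow> real) \<Rightarrow> bool" where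
  "congruent_family n Th \<longleftrightarrow>
     (\<forall>I. finite I \<longrightarrow> cov_tensor_field n I (Th I)) \<and>
     (\<forall>I I' K. finite I \<and> finite I' \<and> congruent_kernel I I' K
        \<and> push I I' K ` M_plus I \<subseteq> M_plus I' \<longrightarrow>
        (\<forall>mu\<in>M_plus I. \<forall>Vs. length Vs = n \<and> set Vs \<subseteq> S_space I \<longrightarrow>
           Th I' (push I I' K mu) (map (push I I' K) Vs) = Th I mu Vs))"

definition index_partition :: "nat list \<Rightarrow> nat set set" where
  "index_partition is = {{k. k < length is \<and> is ! k = is ! l} | l. l < length is}"

end

theory Submission
  imports Defs
begin

text \<open>Equal partitions make i_k \<mapsto> j_k a well-defined bijection between the sets of
  entries, which extends to a permutation s of I. The Markov kernel of s is congruent, fixes the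
  uniform measure \<lambda> c_I and sends \<delta>_i to \<delta>_(s i), so congruence of the family makes the two
  values equal.\<close>

definition perm_kernel :: "(nat \<Rightarrow> nat) \<Rightarrow> nat \<Rightarrow> nat \<Rightarrow> real" where
  "perm_kernel s = (\<lambda>i j. if j = s i then 1 else 0)"

lemma push_perm_kernel:
  assumes bij: "bij_betw s I I" and fin: "finite I" and i': "i' \<in> I"
  shows "push I I (perm_kernel s) x i' = x (inv_into I s i')"
proof -
  have inv_in: "inv_into I s i' \<in> I" using bij i' by (metis bij_betw_def inv_into_into)
  have eq: "\<And>i. i \<in> I \<Longrightarrow> (i' = s i) \<longleftrightarrow> (i = inv_into I s i')"
    using bij i' by (metis bij_betw_def bij_betw_inv_into_right inv_into_f_f)
  have "(\<Sum>i\<in>I. perm_kernel s i i' * x i) = (\<Sum>i\<in>I. if i = inv_into I s i' then x i else 0)"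
    by (rule sum.cong) (auto simp: perm_kernel_def eq)
  also have "\<dots> = x (inv_into I s i')" using fin inv_in by simp
  finally show ?thesis using i' by (simp add: push_def)
qed

lemma push_outside: "i' \<notin> I' \<Longrightarrow> push I I' K x i' = 0"
  by (simp add: push_def)

lemma congruent_kernel_perm_kernel:
  assumes bij: "bij_betw s I I" and fin: "finite I"
  shows "congruent_kernel I I (perm_kernel s)"
  unfolding congruent_kernel_def
proof (intro conjI exI[of _ "inv_into I s"] ballI impI)
  show "markov_kernel I I (perm_kernel s)"
    using fin bij_betw_apply[OF bij] by (auto simp: markov_kernel_def perm_kernel_def)
next
  fix i' assume "i' \<in> I"
  then show "inv_into I s i' \<in> I" using bij by (metis bij_betw_def inv_into_into)
next
  fix i i' assume "i \<in> I" "i' \<in> I" "inv_into I s i' \<noteq> i"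
  then show "perm_kernel s i i' = 0" using bij by (auto simp: perm_kernel_def bij_betw_def)
qed

lemma push_perm_kernel_M_plus:
  assumes bij: "bij_betw s I I" and fin: "finite I"
  shows "push I I (perm_kernel s) ` M_plus I \<subseteq> M_plus I"
proof clarify
  fix x assume x: "x \<in> M_plus I"
  show "push I I (perm_kernel s) x \<in> M_plus I" unfolding M_plus_def S_space_def
  proof (intro CollectI conjI allI impI ballI)
    fix i assume "i \<notin> I"
    then show "push I I (perm_kernel s) x i = 0" by (rule push_outside)
  next
    fix i assume i: "i \<in> I"
    then have "inv_into I s i \<in> I" using bij by (metis bij_betw_def inv_into_into)
    then show "push I I (perm_kernel s) x i > 0"
      using x i by (simp add: push_perm_kernel[OF bij fin] M_plus_def)
  qed
qed

lemma push_perm_kernel_constant: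
  assumes bij: "bij_betw s I I" and fin: "finite I" and mu: "mu \<in> S_space I"
    and const: "\<And>i j. i \<in> I \<Longrightarrow> j \<in> I \<Longrightarrow> mu i = mu j"
  shows "push I I (perm_kernel s) mu = mu"
proof
  fix i' show "push I I (perm_kernel s) mu i' = mu i'"
  proof (cases "i' \<in> I")
    case True
    then have "inv_into I s i' \<in> I" using bij by (metis bij_betw_def inv_into_into)
    then have "mu (inv_into I s i') = mu i'" using True by (rule const)
    then show ?thesis using True by (simp add: push_perm_kernel[OF bij fin])
  next
    case False
    then show ?thesis using mu by (simp add: push_outside S_space_def)
  qed
qed

lemma push_perm_kernel_delta:
  assumes bij: "bij_betw s I I" and fin: "finite I" and a: "a \<in> I"
  shows "push I I (perm_kernel s) (delta a) = delta (s a)"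
proof
  fix i' show "push I I (perm_kernel s) (delta a) i' = delta (s a) i'"
  proof (cases "i' \<in> I")
    case True
    have "(inv_into I s i' = a) \<longleftrightarrow> (i' = s a)"
      using bij a True by (metis bij_betw_def bij_betw_inv_into_right inv_into_f_f)
    then show ?thesis using True by (auto simp: push_perm_kernel[OF bij fin] delta_def)
  next
    case False
    moreover have "s a \<in> I" using bij a by (rule bij_betw_apply)
    ultimately show ?thesis by (auto simp: push_outside delta_def)
  qed
qed

lemma congruent_family_permute_deltas:
  assumes cf: "congruent_family n Th" and fin: "finite I" and bij: "bij_betw s I I"
    and mu: "mu \<in> M_plus I" and const: "\<And>i j. i \<in> I \<Longrightarrow> j \<in> I \<Longrightarrow> mu i = mu j"
    and len: "length is = n" and sub: "set is \<subseteq> I"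
  shows "Th I mu (map delta (map s is)) = Th I mu (map delta is)"
proof -
  let ?K = "perm_kernel s"
  have Vs: "length (map delta is) = n" "set (map delta is) \<subseteq> S_space I"
    using len sub by (auto simp: S_space_def delta_def)
  have "\<forall>mu\<in>M_plus I. \<forall>Vs. length Vs = n \<and> set Vs \<subseteq> S_space I \<longrightarrow>
      Th I (push I I ?K mu) (map (push I I ?K) Vs) = Th I mu Vs"
    using cf fin congruent_kernel_perm_kernel[OF bij fin] push_perm_kernel_M_plus[OF bij fin]
    unfolding congruent_family_def by blast
  then have congr: "Th I (push I I ?K mu) (map (push I I ?K) (map delta is)) = Th I mu (map delta is)"
    using mu Vs by blast
  have push_mu: "push I I ?K mu = mu"
    using mu unfolding M_plus_def by (intro push_perm_kernel_constant[OF bij fin _ const]) simp_all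
  have push_deltas: "map (push I I ?K) (map delta is) = map delta (map s is)"
    using sub by (auto simp: push_perm_kernel_delta[OF bij fin])
  show ?thesis using congr unfolding push_mu push_deltas .
qed

lemma index_partition_eq_imp_nth_eq_iff:
  assumes part: "index_partition xs = index_partition ys" and len: "length xs = length ys"
    and k: "k < length xs" and l: "l < length xs"
  shows "xs ! k = xs ! l \<longleftrightarrow> ys ! k = ys ! l"
proof -
  have "{k. k < length xs \<and> xs ! k = xs ! l} \<in> index_partition ys"
    using part l unfolding index_partition_def by blast
  then obtain m where m: "{k. k < length xs \<and> xs ! k = xs ! l} = {k. k < length ys \<and> ys ! k = ys ! m}"
    unfolding index_partition_def by blast
  then have "ys ! l = ys ! m" using l len by blast
  moreover have "xs ! k = xs ! l \<longleftrightarrow> ys ! k = ys ! m"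
    using m k len by (simp add: set_eq_iff) (metis (mono_tags, lifting))
  ultimately show ?thesis by simp
qed

lemma ex_bij_betw_map_eq:
  assumes len: "length xs = length ys"
    and same: "\<And>k l. k < length xs \<Longrightarrow> l < length xs \<Longrightarrow> xs ! k = xs ! l \<longleftrightarrow> ys ! k = ys ! l"
  shows "\<exists>f. bij_betw f (set xs) (set ys) \<and> map f xs = ys"
proof -
  define f where "f x = ys ! (SOME k. k < length xs \<and> xs ! k = x)" for x
  have f_nth: "f (xs ! k) = ys ! k" if k: "k < length xs" for k
  proof -
    have "\<exists>k'. k' < length xs \<and> xs ! k' = xs ! k" using k by blast
    then have "(SOME k'. k' < length xs \<and> xs ! k' = xs ! k) < length xs
        \<and> xs ! (SOME k'. k' < length xs \<and> xs ! k' = xs ! k) = xs ! k"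
      by (rule someI_ex)
    then show ?thesis unfolding f_def using same k by blast
  qed
  have map_f: "map f xs = ys" by (rule nth_equalityI) (simp_all add: len f_nth)
  have "inj_on f (set xs)"
  proof (rule inj_onI)
    fix x y assume "x \<in> set xs" "y \<in> set xs" "f x = f y"
    then obtain k l where "k < length xs" "l < length xs" "x = xs ! k" "y = xs ! l" "f x = f y"
      by (metis in_set_conv_nth)
    then show "x = y" using f_nth same by auto
  qed
  then have "bij_betw f (set xs) (set ys)"
    unfolding bij_betw_def using map_f by (metis set_map)
  with map_f show ?thesis by blast
qed

lemma bij_betw_extend_to_permutation:
  assumes f: "bij_betw f A B" and "A \<subseteq> I" "B \<subseteq> I" and fin: "finite I"
  obtains s where "bij_betw s I I" "\<And>x. x \<in> A \<Longrightarrow> s x = f x"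
proof -
  have "card (I - A) = card (I - B)"
    using bij_betw_same_card[OF f] assms(2,3) fin by (simp add: card_Diff_subset finite_subset)
  then obtain g where g: "bij_betw g (I - A) (I - B)"
    using fin by (metis finite_Diff finite_same_card_bij)
  define s where "s x = (if x \<in> A then f x else g x)" for x
  have "bij_betw s A B" using f by (rule bij_betw_cong[THEN iffD1, rotated]) (simp add: s_def)
  moreover have "bij_betw s (I - A) (I - B)"
    using g by (rule bij_betw_cong[THEN iffD1, rotated]) (simp add: s_def)
  ultimately have "bij_betw s (A \<union> (I - A)) (B \<union> (I - B))"
    by (rule bij_betw_combine) blast
  with assms(2,3) have "bij_betw s I I" by (simp add: Un_absorb1)
  then show ?thesis using that by (simp add: s_def)
qed

lemma scaled_c_I_in_M_plus:
  assumes "finite I" and "lam > 0"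
  shows "(\<lambda>i. lam * c_I I i) \<in> M_plus I"
  using assms by (auto simp: M_plus_def S_space_def c_I_def card_gt_0_iff intro!: divide_pos_pos)

theorem lemma4p5:
  fixes Th :: "nat set \<Rightarrow> (nat \<Rightarrow> real) \<Rightarrow> (nat \<Rightarrow> real) list \<Rightarrow> real"
    and n :: nat and I :: "nat set" and lam :: real and "is" js :: "nat list"
  assumes "congruent_family n Th" and "finite I" and "lam > 0"
    and "length is = n" and "length js = n" and "set is \<subseteq> I" and "set js \<subseteq> I"
    and "index_partition is = index_partition js"
  shows "Th I (\<lambda>i. lam * c_I I i) (map delta is) = Th I (\<lambda>i. lam * c_I I i) (map delta js)"
proof -
  have "\<exists>f. bij_betw f (set is) (set js) \<and> map f is = js"
    using assms(4,5) index_partition_eq_imp_nth_eq_iff[OF assms(8)]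
    by (intro ex_bij_betw_map_eq) auto
  then obtain f where f: "bij_betw f (set is) (set js)" and map_f: "map f is = js" by blast
  obtain s where s: "bij_betw s I I" and s_f: "\<And>x. x \<in> set is \<Longrightarrow> s x = f x"
    using bij_betw_extend_to_permutation[OF f assms(6,7,2)] by blast
  have map_s: "map s is = js" unfolding map_f[symmetric] by (rule map_cong[OF refl]) (rule s_f)
  have const: "\<And>i j. i \<in> I \<Longrightarrow> j \<in> I \<Longrightarrow> lam * c_I I i = lam * c_I I j"
    by (simp add: c_I_def)
  show ?thesis
    using congruent_family_permute_deltas[OF assms(1,2) s scaled_c_I_in_M_plus[OF assms(2,3)]
        const assms(4,6)] map_s
    by simp
qed

end
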